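(* Let $(\mathcal{C}^{\bullet},\partial)$ be a cochain complex of real vector spaces with a compatible bigrading $\mathcal{C}^{k}=\bigoplus_{p+q=k}\mathcal{C}^{p,q}$, $\mathcal{C}^{p,q}=\{0\}$ whenever $p<0$ or $q<0$, and $\partial=\partial_{2,-1}+\partial_{1,0}+\partial_{0,1}$ with $\partial_{i,j}(\mathcal{C}^{p,q})\subseteq\mathcal{C}^{p+i,q+j}$. Then for all $p,q\in\mathbb{Z}$ with $p+q=k$, \[ E^{p,q}_{\infty}\cong\frac{\pi_{q}(Z^{k}(\mathcal{C},\partial))\cap\mathcal{C}^{p,q}}{\pi_{q}(B^{k}(\mathcal{C},\partial))\cap\mathcal{C}^{p,q}}. \]
   Context: $F^{p}\mathcal{C}:=\bigoplus_{i\geq p}\mathcal{C}^{i,j}$ and $F^{p}\mathcal{C}^{k}:=F^{p}\mathcal{C}\cap\mathcal{C}^{k}$; $E^{p,q}_{\infty}:=\dfrac{Z^{p+q}(\mathcal{C},\partial)\cap F^{p}\mathcal{C}^{p+q}+F^{p+1}\mathcal{C}^{p+q}}{B^{p+q}(\mathcal{C},\partial)\cap F^{p}\mathcal{C}^{p+q}+F^{p+1}\mathcal{C}^{p+q}}$ (the limit term of the spectral sequence of the filtered complex). $G^{q}\mathcal{C}:=\bigoplus_{j\geq q}\mathcal{C}^{i,j}$ and $\pi_{q}:\mathcal{C}\to G^{q}\mathcal{C}$ is the projection along the bigrading. $Z^{k},B^{k}$ denote $k$-cocycles and $k$-coboundaries. *)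

theory Defs
  imports "HOL-Analysis.Analysis"
begin

text \<open>A bigraded real vector space: the total space is the whole type 'a, and
  C p q are subspaces such that every vector is uniquely a finite sum of
  homogeneous components (internal direct sum of all the C p q).\<close>

definition is_decomp :: "(int \<Rightarrow> int \<Rightarrow> 'a::real_vector set) \<Rightarrow> 'a \<Rightarrow> (int \<Rightarrow> int \<Rightarrow> 'a) \<Rightarrow> bool" where
  "is_decomp C x f \<longleftrightarrow> finite {(p,q). f p q \<noteq> 0} \<and> (\<forall>p q. f p q \<in> C p q)
      \<and> x = (\<Sum>(p,q)\<in>{(p,q). f p q \<noteq> 0}. f p q)"

definition bigraded :: "(int \<Rightarrow> int \<Rightarrow> 'a::real_vector set) \<Rightarrow> bool" where
  "bigraded C \<longleftrightarrow> (\<forall>p q. subspace (C p q)) \<and> (\<forall>x. \<exists>!f. is_decomp C x f)"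

definition comp :: "(int \<Rightarrow> int \<Rightarrow> 'a::real_vector set) \<Rightarrow> int \<Rightarrow> int \<Rightarrow> 'a \<Rightarrow> 'a" where
  "comp C p q x = (THE f. is_decomp C x f) p q"

definition Ctot :: "(int \<Rightarrow> int \<Rightarrow> 'a::real_vector set) \<Rightarrow> int \<Rightarrow> 'a set" where
  "Ctot C k = span (\<Union>{C p q | p q. p + q = k})"

definition Filt :: "(int \<Rightarrow> int \<Rightarrow> 'a::real_vector set) \<Rightarrow> int \<Rightarrow> 'a set" where
  "Filt C p = span (\<Union>{C i j | i j. p \<le> i})"

definition FiltK :: "(int \<Rightarrow> int \<Rightarrow> 'a::real_vector set) \<Rightarrow> int \<Rightarrow> int \<Rightarrow> 'a set" where
  "FiltK C p k = Filt C p \<inter> Ctot C k"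

definition piG :: "(int \<Rightarrow> int \<Rightarrow> 'a::real_vector set) \<Rightarrow> int \<Rightarrow> 'a \<Rightarrow> 'a" where
  "piG C q x = (\<Sum>(i,j)\<in>{(i,j). comp C i j x \<noteq> 0 \<and> q \<le> j}. comp C i j x)"

definition cocycles :: "(int \<Rightarrow> int \<Rightarrow> 'a::real_vector set) \<Rightarrow> ('a \<Rightarrow> 'a) \<Rightarrow> int \<Rightarrow> 'a set" where
  "cocycles C d k = {x \<in> Ctot C k. d x = 0}"

definition coboundaries :: "(int \<Rightarrow> int \<Rightarrow> 'a::real_vector set) \<Rightarrow> ('a \<Rightarrow> 'a) \<Rightarrow> int \<Rightarrow> 'a set" where
  "coboundaries C d k = d ` Ctot C (k - 1)"

definition setsum :: "'a::real_vector set \<Rightarrow> 'a set \<Rightarrow> 'a set" where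
  "setsum X Y = {a + b | a b. a \<in> X \<and> b \<in> Y}"

definition Einf_num :: "(int \<Rightarrow> int \<Rightarrow> 'a::real_vector set) \<Rightarrow> ('a \<Rightarrow> 'a) \<Rightarrow> int \<Rightarrow> int \<Rightarrow> 'a set" where
  "Einf_num C d p q = setsum (cocycles C d (p + q) \<inter> FiltK C p (p + q)) (FiltK C (p + 1) (p + q))"

definition Einf_den :: "(int \<Rightarrow> int \<Rightarrow> 'a::real_vector set) \<Rightarrow> ('a \<Rightarrow> 'a) \<Rightarrow> int \<Rightarrow> int \<Rightarrow> 'a set" where
  "Einf_den C d p q = setsum (coboundaries C d (p + q) \<inter> FiltK C p (p + q)) (FiltK C (p + 1) (p + q))"

text \<open>Quotient A/A' realised as the set of cosets x + A', x \<in> A, and linear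
  isomorphism of two such quotient spaces.\<close>
definition coset :: "'a::real_vector set \<Rightarrow> 'a \<Rightarrow> 'a set" where
  "coset A' x = {x + y | y. y \<in> A'}"

definition qspace :: "'a::real_vector set \<Rightarrow> 'a set \<Rightarrow> 'a set set" where
  "qspace A A' = coset A' ` A"

definition quot_iso :: "'a::real_vector set \<Rightarrow> 'a set \<Rightarrow> 'b::real_vector set \<Rightarrow> 'b set \<Rightarrow> bool" where
  "quot_iso A A' B B' \<longleftrightarrow> (\<exists>\<phi>. bij_betw \<phi> (qspace A A') (qspace B B') \<and>
     (\<forall>x\<in>A. \<forall>y\<in>A. \<forall>c::real. \<forall>u v. u \<in> \<phi> (coset A' x) \<longrightarrow> v \<in> \<phi> (coset A' y) \<longrightarrow>
        \<phi> (coset A' (c *\<^sub>R x + y)) = coset B' (c *\<^sub>R u + v)))"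

end

theory Submission
  imports Defs
begin

text \<open>The (p,q)-component map g of the bigrading kills F^{p+1}C^k and agrees
  with \<pi>_q on F^pC^k; moreover an element of C^k whose \<pi>_q-projection lies in
  C^{p,q} has no components below filtration degree p. Hence for every subspace W
  of C^k, g maps (W \<inter> F^pC^k) + F^{p+1}C^k onto \<pi>_q(W) \<inter> C^{p,q}, and an element
  of F^pC^k with the same g-image as some w' \<in> W' \<inter> F^pC^k differs from w' by an
  element of F^{p+1}C^k. So g induces the isomorphism for W = Z^k and W' = B^k.\<close>

lemma is_decomp_comp:
  assumes "bigraded C"
  shows "is_decomp C x (\<lambda>p q. comp C p q x)"
proof -
  have "\<exists>!f. is_decomp C x f" using assms unfolding bigraded_def by blast
  hence "is_decomp C x (THE f. is_decomp C x f)" by (rule theI')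
  thus ?thesis unfolding comp_def by simp
qed

lemma comp_eq_if_is_decomp:
  assumes "bigraded C" "is_decomp C x f"
  shows "comp C p q x = f p q"
proof -
  have "\<exists>!f. is_decomp C x f" using assms unfolding bigraded_def by blast
  hence "(THE f. is_decomp C x f) = f" using assms(2) by (metis the1_equality)
  thus ?thesis unfolding comp_def by simp
qed

lemma is_decompI:
  assumes "finite S" "{(p,q). f p q \<noteq> 0} \<subseteq> S" "\<And>p q. f p q \<in> C p q"
    and "x = (\<Sum>(p,q)\<in>S. f p q)"
  shows "is_decomp C x f"
proof -
  have fin: "finite {(p,q). f p q \<noteq> 0}" using assms(1,2) finite_subset by blast
  have "(\<Sum>(p,q)\<in>S. f p q) = (\<Sum>(p,q)\<in>{(p,q). f p q \<noteq> 0}. f p q)"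
    by (rule sum.mono_neutral_right[OF assms(1) assms(2)]) auto
  thus ?thesis unfolding is_decomp_def using fin assms by auto
qed

lemma comp_in_C: "bigraded C \<Longrightarrow> comp C p q x \<in> C p q"
  using is_decomp_comp unfolding is_decomp_def by blast

lemma finite_comp_support: "bigraded C \<Longrightarrow> finite {(p,q). comp C p q x \<noteq> 0}"
  using is_decomp_comp unfolding is_decomp_def by blast

lemma sum_comp: "bigraded C \<Longrightarrow> x = (\<Sum>(p,q)\<in>{(p,q). comp C p q x \<noteq> 0}. comp C p q x)"
  using is_decomp_comp unfolding is_decomp_def by blast

lemma bigraded_eqI:
  assumes "bigraded C" "\<And>p q. comp C p q x = comp C p q y"
  shows "x = y"
  using sum_comp[OF assms(1), of x] sum_comp[OF assms(1), of y] assms(2) by simp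

lemma zero_in_C: "bigraded C \<Longrightarrow> 0 \<in> C p q"
  unfolding bigraded_def using subspace_0 by blast

lemma comp_add:
  assumes bg: "bigraded C"
  shows "comp C p q (x + y) = comp C p q x + comp C p q y"
proof -
  let ?S = "{(p,q). comp C p q x \<noteq> 0} \<union> {(p,q). comp C p q y \<noteq> 0}"
  have fin: "finite ?S" using finite_comp_support[OF bg] by blast
  have "is_decomp C (x + y) (\<lambda>p q. comp C p q x + comp C p q y)"
  proof (rule is_decompI[OF fin])
    show "{(p, q). comp C p q x + comp C p q y \<noteq> 0} \<subseteq> ?S" by auto
    show "comp C p q x + comp C p q y \<in> C p q" for p q
      using bg comp_in_C[OF bg] unfolding bigraded_def by (meson subspace_add)
    have "x = (\<Sum>(p,q)\<in>?S. comp C p q x)"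
      by (subst sum_comp[OF bg, of x], rule sum.mono_neutral_left) (use fin in auto)
    moreover have "y = (\<Sum>(p,q)\<in>?S. comp C p q y)"
      by (subst sum_comp[OF bg, of y], rule sum.mono_neutral_left) (use fin in auto)
    ultimately show "x + y = (\<Sum>(p,q)\<in>?S. comp C p q x + comp C p q y)"
      by (simp add: sum.distrib case_prod_beta)
  qed
  thus ?thesis using comp_eq_if_is_decomp[OF bg] by blast
qed

lemma comp_scaleR:
  assumes bg: "bigraded C"
  shows "comp C p q (c *\<^sub>R x) = c *\<^sub>R comp C p q x"
proof -
  let ?S = "{(p,q). comp C p q x \<noteq> 0}"
  have fin: "finite ?S" using finite_comp_support[OF bg] by blast
  have "is_decomp C (c *\<^sub>R x) (\<lambda>p q. c *\<^sub>R comp C p q x)"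
  proof (rule is_decompI[OF fin])
    show "{(p, q). c *\<^sub>R comp C p q x \<noteq> 0} \<subseteq> ?S" by auto
    show "c *\<^sub>R comp C p q x \<in> C p q" for p q
      using bg comp_in_C[OF bg] unfolding bigraded_def by (meson subspace_scale)
    show "c *\<^sub>R x = (\<Sum>(p,q)\<in>?S. c *\<^sub>R comp C p q x)"
      by (subst sum_comp[OF bg, of x]) (simp add: scaleR_sum_right case_prod_beta)
  qed
  thus ?thesis using comp_eq_if_is_decomp[OF bg] by blast
qed

lemma linear_comp: "bigraded C \<Longrightarrow> linear (comp C p q)"
  by (rule linearI) (simp_all add: comp_add comp_scaleR)

lemma comp_diff: "bigraded C \<Longrightarrow> comp C p q (x - y) = comp C p q x - comp C p q y"
  by (rule linear_diff[OF linear_comp])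

lemma comp_homogeneous:
  assumes bg: "bigraded C" and x: "x \<in> C i j"
  shows "comp C p q x = (if p = i \<and> q = j then x else 0)"
proof -
  have "is_decomp C x (\<lambda>p q. if p = i \<and> q = j then x else 0)"
  proof (rule is_decompI[of "{(i,j)}"])
    show "(if p = i \<and> q = j then x else 0) \<in> C p q" for p q using x zero_in_C[OF bg] by auto
  qed auto
  thus ?thesis using comp_eq_if_is_decomp[OF bg] by blast
qed

lemma span_homogeneous_eq:
  assumes bg: "bigraded C"
  shows "span (\<Union>{C i j | i j. P i j}) = {x. \<forall>i j. \<not> P i j \<longrightarrow> comp C i j x = 0}"
    (is "span ?U = ?V")
proof
  have "subspace ?V"
    unfolding subspace_def
    using comp_add[OF bg] comp_scaleR[OF bg] comp_homogeneous[OF bg zero_in_C[OF bg]] by auto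
  then show "span ?U \<subseteq> ?V"
    by (rule span_minimal[rotated]) (auto simp: comp_homogeneous[OF bg])
  show "?V \<subseteq> span ?U"
  proof
    fix x assume x: "x \<in> ?V"
    have "(\<Sum>(p,q)\<in>{(p,q). comp C p q x \<noteq> 0}. comp C p q x) \<in> span ?U"
    proof (rule span_sum)
      fix pq assume "pq \<in> {(p,q). comp C p q x \<noteq> 0}"
      then obtain a b where pq: "pq = (a,b)" "comp C a b x \<noteq> 0" by auto
      hence "comp C a b x \<in> ?U" using x comp_in_C[OF bg] by blast
      thus "(case pq of (p,q) \<Rightarrow> comp C p q x) \<in> span ?U"
        using pq by (simp add: span_base)
    qed
    thus "x \<in> span ?U" using sum_comp[OF bg, of x] by simp
  qed
qed

lemma mem_Ctot_iff:
  "bigraded C \<Longrightarrow> x \<in> Ctot C k \<longleftrightarrow> (\<forall>i j. i + j \<noteq> k \<longrightarrow> comp C i j x = 0)"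
  unfolding Ctot_def using span_homogeneous_eq[of C "\<lambda>i j. i + j = k"] by auto

lemma mem_Filt_iff:
  "bigraded C \<Longrightarrow> x \<in> Filt C p \<longleftrightarrow> (\<forall>i j. i < p \<longrightarrow> comp C i j x = 0)"
  unfolding Filt_def using span_homogeneous_eq[of C "\<lambda>i j. p \<le> i"] by (auto simp: not_le)

lemma mem_C_iff:
  assumes bg: "bigraded C"
  shows "x \<in> C p q \<longleftrightarrow> (\<forall>i j. \<not> (i = p \<and> j = q) \<longrightarrow> comp C i j x = 0)"
proof -
  have "\<Union>{C i j | i j. i = p \<and> j = q} = C p q" by auto
  moreover have "subspace (C p q)" using bg unfolding bigraded_def by blast
  ultimately have "C p q = {x. \<forall>i j. \<not> (i = p \<and> j = q) \<longrightarrow> comp C i j x = 0}"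
    using span_homogeneous_eq[OF bg, of "\<lambda>i j. i = p \<and> j = q"] by (metis span_eq_iff)
  thus ?thesis by blast
qed

lemma C_subset_Ctot: "i + j = k \<Longrightarrow> C i j \<subseteq> Ctot C k"
  unfolding Ctot_def by (auto intro!: span_base)

lemma subspace_Ctot: "subspace (Ctot C k)"
  unfolding Ctot_def by simp

lemma subspace_FiltK: "subspace (FiltK C p k)"
  unfolding FiltK_def Filt_def Ctot_def by (intro subspace_inter subspace_span)

lemma FiltK_succ_subset: "FiltK C (p + 1) k \<subseteq> FiltK C p k"
proof -
  have "Filt C (p + 1) \<subseteq> Filt C p"
    unfolding Filt_def by (intro span_mono Union_mono Collect_mono) auto
  then show ?thesis unfolding FiltK_def by blast
qed

lemma linear_image_Ctot:
  assumes h: "linear h" and hC: "\<And>i j. h ` C i j \<subseteq> Ctot C (i + j + 1)"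
  shows "h ` Ctot C m \<subseteq> Ctot C (m + 1)"
proof -
  have "h ` \<Union>{C i j | i j. i + j = m} \<subseteq> Ctot C (m + 1)" using hC by blast
  hence "span (h ` \<Union>{C i j | i j. i + j = m}) \<subseteq> Ctot C (m + 1)"
    by (rule span_minimal) (rule subspace_Ctot)
  thus ?thesis unfolding Ctot_def[of C m] linear_span_image[OF h] .
qed

lemma image_C_subset_Ctot_succ:
  assumes "\<And>x. d x = d21 x + d10 x + d01 x"
    and "\<And>p q. d21 ` C p q \<subseteq> C (p + 2) (q - 1)"
    and "\<And>p q. d10 ` C p q \<subseteq> C (p + 1) q"
    and "\<And>p q. d01 ` C p q \<subseteq> C p (q + 1)"
  shows "d ` C i j \<subseteq> Ctot C (i + j + 1)"
proof
  fix y assume "y \<in> d ` C i j"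
  then obtain x where x: "x \<in> C i j" "y = d x" by blast
  have "d21 x \<in> C (i + 2) (j - 1)" "d10 x \<in> C (i + 1) j" "d01 x \<in> C i (j + 1)"
    using assms(2-4) x by blast+
  then have "d21 x \<in> Ctot C (i + j + 1)" "d10 x \<in> Ctot C (i + j + 1)"
    "d01 x \<in> Ctot C (i + j + 1)"
    by (auto elim!: C_subset_Ctot[THEN subsetD, rotated])
  then show "y \<in> Ctot C (i + j + 1)"
    using x assms(1) by (simp add: subspace_add[OF subspace_Ctot])
qed

lemma comp_piG:
  assumes bg: "bigraded C"
  shows "comp C a b (piG C q x) = (if q \<le> b then comp C a b x else 0)"
proof -
  let ?S = "{(i,j). comp C i j x \<noteq> 0 \<and> q \<le> j}"
  have fin: "finite ?S" using finite_comp_support[OF bg, of x] by (rule finite_subset[rotated]) auto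
  have "is_decomp C (piG C q x) (\<lambda>a b. if q \<le> b then comp C a b x else 0)"
  proof (rule is_decompI[OF fin])
    show "(if q \<le> b then comp C a b x else 0) \<in> C a b" for a b
      using comp_in_C[OF bg] zero_in_C[OF bg] by auto
    show "piG C q x = (\<Sum>(p,q')\<in>?S. if q \<le> q' then comp C p q' x else 0)"
      unfolding piG_def by (rule sum.cong) auto
  qed auto
  thus ?thesis using comp_eq_if_is_decomp[OF bg] by blast
qed

lemma piG_eq_comp:
  assumes bg: "bigraded C" and b: "b \<in> Ctot C (p + q)" "b \<in> Filt C p"
  shows "piG C q b = comp C p q b"
proof (rule bigraded_eqI[OF bg])
  fix i j
  have "comp C i j b = 0" if "i + j \<noteq> p + q \<or> i < p"
    using b that mem_Ctot_iff[OF bg] mem_Filt_iff[OF bg] by blast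
  then show "comp C i j (piG C q b) = comp C i j (comp C p q b)"
    unfolding comp_piG[OF bg] comp_homogeneous[OF bg comp_in_C[OF bg]]
    by (cases "i + j = p + q"; cases "i < p"; auto)
qed

lemma mem_Filt_if_piG_in_C:
  assumes bg: "bigraded C" and b: "b \<in> Ctot C (p + q)" "piG C q b \<in> C p q"
  shows "b \<in> Filt C p"
  unfolding mem_Filt_iff[OF bg]
proof (intro allI impI)
  fix i j assume i: "i < p"
  show "comp C i j b = 0"
  proof (cases "i + j = p + q")
    case True
    hence "comp C i j b = comp C i j (piG C q b)" using i by (simp add: comp_piG[OF bg])
    also have "\<dots> = 0" using b(2) mem_C_iff[OF bg] i by auto
    finally show ?thesis .
  next
    case False thus ?thesis using b(1) mem_Ctot_iff[OF bg] by blast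
  qed
qed

lemma piG_image_inter_C:
  assumes bg: "bigraded C" and W: "W \<subseteq> Ctot C (p + q)"
  shows "piG C q ` W \<inter> C p q = comp C p q ` (W \<inter> FiltK C p (p + q))"
proof (intro equalityI subsetI)
  fix y assume "y \<in> piG C q ` W \<inter> C p q"
  then obtain w where w: "w \<in> W" "y = piG C q w" "piG C q w \<in> C p q" by auto
  hence "w \<in> Filt C p" using mem_Filt_if_piG_in_C[OF bg] W by blast
  with w W show "y \<in> comp C p q ` (W \<inter> FiltK C p (p + q))"
    unfolding FiltK_def using piG_eq_comp[OF bg] by blast
next
  fix y assume "y \<in> comp C p q ` (W \<inter> FiltK C p (p + q))"
  then obtain w where "w \<in> W" "w \<in> FiltK C p (p + q)" "y = comp C p q w" by auto
  then show "y \<in> piG C q ` W \<inter> C p q"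
    unfolding FiltK_def using piG_eq_comp[OF bg] comp_in_C[OF bg] by (metis IntD1 IntD2 IntI image_eqI)
qed

lemma comp_FiltK_succ:
  assumes "bigraded C" "x \<in> FiltK C (p + 1) k"
  shows "comp C p q x = 0"
  using assms mem_Filt_iff[OF assms(1)] unfolding FiltK_def by simp

lemma comp_image_setsum_FiltK:
  assumes bg: "bigraded C"
  shows "comp C p q ` setsum (V \<inter> FiltK C p k) (FiltK C (p + 1) k)
           = comp C p q ` (V \<inter> FiltK C p k)"
proof (intro equalityI subsetI)
  fix y assume "y \<in> comp C p q ` setsum (V \<inter> FiltK C p k) (FiltK C (p + 1) k)"
  then obtain v f where "v \<in> V \<inter> FiltK C p k" "f \<in> FiltK C (p + 1) k" "y = comp C p q (v + f)"
    unfolding setsum_def by auto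
  then show "y \<in> comp C p q ` (V \<inter> FiltK C p k)"
    using comp_FiltK_succ[OF bg] comp_add[OF bg] by auto
next
  fix y assume "y \<in> comp C p q ` (V \<inter> FiltK C p k)"
  then obtain v where "v \<in> V \<inter> FiltK C p k" "y = comp C p q (v + 0)" by auto
  then show "y \<in> comp C p q ` setsum (V \<inter> FiltK C p k) (FiltK C (p + 1) k)"
    unfolding setsum_def using subspace_0[OF subspace_FiltK] by blast
qed

lemma FiltK_succ_if_comp_zero:
  assumes bg: "bigraded C" and x: "x \<in> FiltK C p (p + q)" and g: "comp C p q x = 0"
  shows "x \<in> FiltK C (p + 1) (p + q)"
proof -
  have "comp C i j x = 0" if "i < p + 1" for i j
  proof (cases "i < p")
    case True thus ?thesis using x mem_Filt_iff[OF bg] unfolding FiltK_def by blast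
  next
    case False
    hence "i = p" using that by simp
    thus ?thesis using g x mem_Ctot_iff[OF bg] unfolding FiltK_def by (cases "j = q") auto
  qed
  thus ?thesis using x mem_Filt_iff[OF bg] unfolding FiltK_def by blast
qed

lemma mem_coset_iff: "u \<in> coset B w \<longleftrightarrow> u - w \<in> B"
  unfolding coset_def by (auto simp: algebra_simps) (metis diff_add_cancel)

lemma coset_eq_iff: "subspace B \<Longrightarrow> coset B w = coset B w' \<longleftrightarrow> w - w' \<in> B"
proof
  assume "subspace B" "coset B w = coset B w'"
  moreover have "w \<in> coset B w" using \<open>subspace B\<close> by (simp add: mem_coset_iff subspace_0)
  ultimately show "w - w' \<in> B" by (simp add: mem_coset_iff)
next
  assume B: "subspace B" "w - w' \<in> B"
  show "coset B w = coset B w'"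
  proof (rule set_eqI)
    fix u
    have "u - w' = (u - w) + (w - w')" "u - w = (u - w') - (w - w')" by simp_all
    thus "u \<in> coset B w \<longleftrightarrow> u \<in> coset B w'" unfolding mem_coset_iff
      using B by (metis subspace_add subspace_diff)
  qed
qed

definition induced_quot_map :: "('a::real_vector \<Rightarrow> 'b::real_vector) \<Rightarrow> 'b set \<Rightarrow> 'a set \<Rightarrow> 'b set"
  where "induced_quot_map g B' S = {u. \<exists>s\<in>S. u - g s \<in> B'}"

lemma induced_quot_map_coset:
  assumes A': "subspace A'" and B': "subspace B'" and g: "linear g" and gA': "g ` A' \<subseteq> B'"
  shows "induced_quot_map g B' (coset A' x) = coset B' (g x)"
proof (rule set_eqI)
  fix u
  show "u \<in> induced_quot_map g B' (coset A' x) \<longleftrightarrow> u \<in> coset B' (g x)"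
  proof
    assume "u \<in> induced_quot_map g B' (coset A' x)"
    then obtain s where s: "s - x \<in> A'" "u - g s \<in> B'"
      unfolding induced_quot_map_def by (auto simp: mem_coset_iff)
    have "g (s - x) \<in> B'" using gA' s(1) by blast
    hence "(u - g s) + g (s - x) \<in> B'" using s(2) B' by (simp add: subspace_add)
    thus "u \<in> coset B' (g x)" using g by (simp add: mem_coset_iff linear_diff)
  next
    assume "u \<in> coset B' (g x)"
    moreover have "x \<in> coset A' x" using A' by (simp add: mem_coset_iff subspace_0)
    ultimately show "u \<in> induced_quot_map g B' (coset A' x)"
      unfolding induced_quot_map_def by (auto simp: mem_coset_iff)
  qed
qed

lemma quot_iso_by_linear_map:
  assumes A: "subspace A" and A': "subspace A'" and B': "subspace B'"
    and g: "linear g" and gA': "g ` A' \<subseteq> B'" and gA: "g ` A = B"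
    and preimage: "\<And>x. x \<in> A \<Longrightarrow> g x \<in> B' \<Longrightarrow> x \<in> A'"
  shows "quot_iso A A' B B'"
  unfolding quot_iso_def
proof (intro exI conjI ballI allI impI)
  let ?\<phi> = "induced_quot_map g B'"
  note coset_map = induced_quot_map_coset[OF A' B' g gA']
  show "bij_betw ?\<phi> (qspace A A') (qspace B B')"
    unfolding bij_betw_def qspace_def
  proof
    show "inj_on ?\<phi> (coset A' ` A)"
    proof (rule inj_onI)
      fix S T assume "S \<in> coset A' ` A" "T \<in> coset A' ` A" "?\<phi> S = ?\<phi> T"
      then obtain x y where xy: "x \<in> A" "y \<in> A" "S = coset A' x" "T = coset A' y"
        "coset B' (g x) = coset B' (g y)" using coset_map by auto
      hence "g (x - y) \<in> B'" using coset_eq_iff[OF B'] g by (simp add: linear_diff)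
      moreover have "x - y \<in> A" using A xy by (simp add: subspace_diff)
      ultimately show "S = T" using preimage xy coset_eq_iff[OF A'] by simp
    qed
    show "?\<phi> ` coset A' ` A = coset B' ` B"
      using coset_map gA by (auto simp: image_image)
  qed
  fix x y c u v
  assume "u \<in> ?\<phi> (coset A' x)" "v \<in> ?\<phi> (coset A' y)"
  hence uv: "u - g x \<in> B'" "v - g y \<in> B'" by (simp_all add: coset_map mem_coset_iff)
  have "g (c *\<^sub>R x + y) - (c *\<^sub>R u + v) = - (c *\<^sub>R (u - g x) + (v - g y))"
    using g by (simp add: linear_add linear_scale algebra_simps)
  also have "\<dots> \<in> B'"
    using uv by (intro subspace_neg[OF B'] subspace_add[OF B'] subspace_scale[OF B'])
  finally show "?\<phi> (coset A' (c *\<^sub>R x + y)) = coset B' (c *\<^sub>R u + v)"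
    using coset_map coset_eq_iff[OF B'] by simp
qed

lemma quot_iso_filtration_quotient_piG:
  assumes bg: "bigraded C"
    and W: "subspace W" "W \<subseteq> Ctot C (p + q)"
    and W': "subspace W'" "W' \<subseteq> Ctot C (p + q)"
  shows "quot_iso (setsum (W \<inter> FiltK C p (p + q)) (FiltK C (p + 1) (p + q)))
                  (setsum (W' \<inter> FiltK C p (p + q)) (FiltK C (p + 1) (p + q)))
                  (piG C q ` W \<inter> C p q) (piG C q ` W' \<inter> C p q)"
proof -
  let ?g = "comp C p q" and ?F = "FiltK C p (p + q)" and ?F1 = "FiltK C (p + 1) (p + q)"
  show ?thesis
  proof (rule quot_iso_by_linear_map[OF _ _ _ linear_comp[OF bg]])
    show "subspace (setsum (W \<inter> ?F) ?F1)" "subspace (setsum (W' \<inter> ?F) ?F1)"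
      unfolding setsum_def
      by (intro subspace_sums subspace_inter subspace_FiltK W(1) W'(1))+
    show "subspace (piG C q ` W' \<inter> C p q)"
      unfolding piG_image_inter_C[OF bg W'(2)]
      by (intro linear_subspace_image linear_comp bg subspace_inter W'(1) subspace_FiltK)
    show "?g ` setsum (W' \<inter> ?F) ?F1 \<subseteq> piG C q ` W' \<inter> C p q"
      unfolding piG_image_inter_C[OF bg W'(2)] comp_image_setsum_FiltK[OF bg] ..
    show "?g ` setsum (W \<inter> ?F) ?F1 = piG C q ` W \<inter> C p q"
      unfolding piG_image_inter_C[OF bg W(2)] comp_image_setsum_FiltK[OF bg] ..
  next
    fix x assume x: "x \<in> setsum (W \<inter> ?F) ?F1" and "?g x \<in> piG C q ` W' \<inter> C p q"
    then obtain w' where w': "w' \<in> W'" "w' \<in> ?F" "?g w' = ?g x"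
      unfolding piG_image_inter_C[OF bg W'(2)] by auto
    from x obtain w f where "x = w + f" "w \<in> ?F" "f \<in> ?F1"
      unfolding setsum_def by blast
    then have "x \<in> ?F"
      using subspace_add[OF subspace_FiltK] FiltK_succ_subset by blast
    then have "x - w' \<in> ?F1"
      using w' by (intro FiltK_succ_if_comp_zero[OF bg])
        (simp_all add: subspace_diff[OF subspace_FiltK] comp_diff[OF bg])
    moreover have "x = w' + (x - w')" by simp
    ultimately show "x \<in> setsum (W' \<inter> ?F) ?F1"
      unfolding setsum_def using w' by blast
  qed
qed

theorem lemma2p1:
  fixes C :: "int \<Rightarrow> int \<Rightarrow> 'a::real_vector set"
    and d d21 d10 d01 :: "'a \<Rightarrow> 'a"
    and p q :: int
  assumes "bigraded C"
    and "\<And>p q. p < 0 \<or> q < 0 \<Longrightarrow> C p q = {0}"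
    and "linear d" and "\<And>x. d (d x) = 0"
    and "linear d21" and "linear d10" and "linear d01"
    and "\<And>x. d x = d21 x + d10 x + d01 x"
    and "\<And>p q. d21 ` C p q \<subseteq> C (p + 2) (q - 1)"
    and "\<And>p q. d10 ` C p q \<subseteq> C (p + 1) q"
    and "\<And>p q. d01 ` C p q \<subseteq> C p (q + 1)"
  shows "quot_iso (Einf_num C d p q) (Einf_den C d p q)
           (piG C q ` cocycles C d (p + q) \<inter> C p q)
           (piG C q ` coboundaries C d (p + q) \<inter> C p q)"
proof -
  have "coboundaries C d (p + q) \<subseteq> Ctot C (p + q)"
    using linear_image_Ctot[OF assms(3) image_C_subset_Ctot_succ[OF assms(8-11)], of "p + q - 1"]
    unfolding coboundaries_def by simp
  moreover have "subspace (coboundaries C d (p + q))"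
    unfolding coboundaries_def by (rule linear_subspace_image[OF assms(3) subspace_Ctot])
  moreover have "subspace (cocycles C d (p + q))"
    unfolding cocycles_def
    using subspace_inter[OF subspace_Ctot linear_subspace_kernel[OF assms(3)]] by (simp add: Int_def)
  ultimately show ?thesis
    unfolding Einf_num_def Einf_den_def
    by (intro quot_iso_filtration_quotient_piG assms(1)) (auto simp: cocycles_def)
qed

end
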